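(* Let $\mathcal{X}$ be a finite set of $n$ items and consider the (full-rank) context dependent random utility model (CDM) on $\mathcal{X}$ with parameter vector $u=(u_{xz})_{x\neq z}\in\mathbb{R}^{n(n-1)}$. Let $\mathcal{C}_{\mathcal{D}}$ be the collection of distinct choice sets appearing in a dataset $\mathcal{D}$. Suppose there are two distinct sizes $k\neq k'$ with $2\le k,k'\le n$, at least one of which is not in $\{2,n\}$, such that $\mathcal{C}_{\mathcal{D}}$ contains every subset of $\mathcal{X}$ of size $k$ and every subset of $\mathcal{X}$ of size $k'$. Then the CDM is identifiable from $\mathcal{D}$: if $u,u'\in\mathbb{R}^{n(n-1)}$ satisfy $P_u(x\mid C)=P_{u'}(x\mid C)$ for all $C\in\mathcal{C}_{\mathcal{D}}$ and all $x\in C$, then $u'-u=\alpha\mathbf{1}$ for some $\alpha\in\mathbb{R}$.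
   Context: A CDM on a finite universe $\mathcal{X}$ of $n$ items has one real parameter $u_{xz}$ for each ordered pair of distinct items $x\neq z$; collect them into $u\in\mathbb{R}^{n(n-1)}$. For a choice set $C\subseteq\mathcal{X}$ with $|C|\ge 2$ and $x\in C$, the probability of choosing $x$ from $C$ is $P_u(x\mid C)=\dfrac{\exp\big(\sum_{z\in C\setminus\{x\}}u_{xz}\big)}{\sum_{y\in C}\exp\big(\sum_{z\in C\setminus\{y\}}u_{yz}\big)}$. Adding the same constant to every $u_{xz}$ does not change any choice probability, so identifiability is understood up to such a shift. A dataset $\mathcal{D}$ is a finite list of pairs $(x_j,C_j)$ with $x_j\in C_j\subseteq\mathcal{X}$, $|C_j|\ge 2$ (item $x_j$ chosen from set $C_j$); $\mathcal{C}_{\mathcal{D}}$ denotes the collection of distinct sets $C_j$ occurring in $\mathcal{D}$. $\mathbf{1}$ is the all-ones vector. *)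

theory Defs
  imports Complex_Main
begin

text \<open>CDM parameters: u x z is u_{xz}; only values for distinct x, z in the universe matter.\<close>

definition cdm_prob :: "('a \<Rightarrow> 'a \<Rightarrow> real) \<Rightarrow> 'a \<Rightarrow> 'a set \<Rightarrow> real" where
  "cdm_prob u x C =
     exp (\<Sum>z\<in>C - {x}. u x z) / (\<Sum>y\<in>C. exp (\<Sum>z\<in>C - {y}. u y z))"

definition valid_dataset :: "'a set \<Rightarrow> ('a \<times> 'a set) list \<Rightarrow> bool" where
  "valid_dataset X D \<longleftrightarrow> (\<forall>(x, C)\<in>set D. x \<in> C \<and> C \<subseteq> X \<and> card C \<ge> 2)"

definition choice_sets :: "('a \<times> 'a set) list \<Rightarrow> 'a set set" where
  "choice_sets D = snd ` set D"

end

theory Submission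
  imports Defs
begin

text \<open>Equal choice probabilities on C make the exponents of u' and u differ on C by a constant,
  so w = u' - u has equal row sums on every offered set. If this holds for all sets of a size k
  with 2 < k < n, comparing two k-sets that differ in one element shows that w x t - w y t does
  not depend on t. Counting a set of size m containing x and y then gives
  w x y - w y x + (m - 2) (w x t - w y t) = 0; as this holds for the two sizes k and k', both
  terms vanish, so w is symmetric with constant columns, hence constant.\<close>

definition row_sum :: "('a \<Rightarrow> 'a \<Rightarrow> real) \<Rightarrow> 'a set \<Rightarrow> 'a \<Rightarrow> real" where
  "row_sum w C x = (\<Sum>z\<in>C - {x}. w x z)"

definition equal_row_sums :: "('a \<Rightarrow> 'a \<Rightarrow> real) \<Rightarrow> 'a set \<Rightarrow> nat \<Rightarrow> bool" where
  "equal_row_sums w X k \<longleftrightarrow>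
     (\<forall>C. C \<subseteq> X \<and> card C = k \<longrightarrow> (\<forall>x\<in>C. \<forall>y\<in>C. row_sum w C x = row_sum w C y))"

lemma cdm_prob_ratio:
  assumes "finite C" and "y \<in> C"
  shows "cdm_prob u x C / cdm_prob u y C = exp (row_sum u C x - row_sum u C y)"
proof -
  have "(\<Sum>t\<in>C. exp (row_sum u C t)) > 0"
    using assms by (intro sum_pos) auto
  then show ?thesis
    by (simp add: cdm_prob_def row_sum_def exp_diff)
qed

lemma cdm_prob_eq_imp_row_sum_diff_eq:
  assumes "finite C" and "x \<in> C" and "y \<in> C"
    and "cdm_prob u x C = cdm_prob u' x C" and "cdm_prob u y C = cdm_prob u' y C"
  shows "row_sum (\<lambda>a b. u' a b - u a b) C x = row_sum (\<lambda>a b. u' a b - u a b) C y"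
proof -
  have "exp (row_sum u C x - row_sum u C y) = exp (row_sum u' C x - row_sum u' C y)"
    using cdm_prob_ratio[OF assms(1,3), of u x] cdm_prob_ratio[OF assms(1,3), of u' x] assms(4,5)
    by simp
  then have "row_sum u C x - row_sum u C y = row_sum u' C x - row_sum u' C y"
    by simp
  then show ?thesis
    by (simp add: row_sum_def sum_subtractf)
qed

lemma equal_row_sums_column_difference:
  assumes "finite X" and "equal_row_sums w X k" and "3 \<le> k" and "k < card X"
    and "x \<in> X" "a \<in> X" "z \<in> X" "z' \<in> X"
    and "x \<noteq> a" "z \<noteq> z'" "x \<noteq> z" "x \<noteq> z'" "a \<noteq> z" "a \<noteq> z'"
  shows "w x z - w x z' = w a z - w a z'"
proof -
  have "card (X - {x, a, z, z'}) = card X - 4"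
    using assms by (subst card_Diff_subset) auto
  then have "k - 3 \<le> card (X - {x, a, z, z'})"
    using assms(3,4) by simp
  then obtain A where A: "A \<subseteq> X - {x, a, z, z'}" "card A = k - 3"
    using obtain_subset_with_card_n by metis
  have finA: "finite A"
    using A(1) assms(1) finite_subset by blast
  have notin: "x \<notin> A" "a \<notin> A" "z \<notin> A" "z' \<notin> A"
    using A(1) by auto
  have expand: "w x a + w x t + (\<Sum>s\<in>A. w x s) = w a x + w a t + (\<Sum>s\<in>A. w a s)"
    if t: "t \<in> X" "t \<notin> A" "t \<noteq> x" "t \<noteq> a" for t
  proof -
    let ?C = "insert x (insert a (insert t A))"
    have "card ?C = k"
      using t finA notin A(2) assms(3,9) by auto
    moreover have "?C \<subseteq> X"
      using t A(1) assms(5,6) by auto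
    ultimately have "row_sum w ?C x = row_sum w ?C a"
      using assms(2) unfolding equal_row_sums_def by blast
    moreover have "?C - {x} = insert a (insert t A)" "?C - {a} = insert x (insert t A)"
      using t notin assms(9) by auto
    ultimately show ?thesis
      using t finA notin assms(9) by (simp add: row_sum_def)
  qed
  show ?thesis
    using expand[of z] expand[of z'] notin assms(7-14) by simp
qed

lemma equal_row_sums_pair_identity:
  assumes "finite X" and "equal_row_sums w X m" and "2 \<le> m" and "m \<le> card X"
    and "x \<in> X" "y \<in> X" "x \<noteq> y"
    and c: "\<And>t. t \<in> X - {x, y} \<Longrightarrow> w x t - w y t = c"
  shows "w x y - w y x + real (m - 2) * c = 0"
proof -
  have "card (X - {x, y}) = card X - 2"
    using assms by (subst card_Diff_subset) auto
  then have "m - 2 \<le> card (X - {x, y})"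
    using assms(4) by simp
  then obtain B where B: "B \<subseteq> X - {x, y}" "card B = m - 2"
    using obtain_subset_with_card_n by metis
  have finB: "finite B"
    using B(1) assms(1) finite_subset by blast
  have notin: "x \<notin> B" "y \<notin> B"
    using B(1) by auto
  then have "card (insert x (insert y B)) = m" "insert x (insert y B) \<subseteq> X"
    using B finB assms(3,5-7) by auto
  then have "row_sum w (insert x (insert y B)) x = row_sum w (insert x (insert y B)) y"
    using assms(2) unfolding equal_row_sums_def by blast
  moreover have "insert x (insert y B) - {x} = insert y B" "insert x (insert y B) - {y} = insert x B"
    using B(1) assms(7) by auto
  ultimately have "w x y + (\<Sum>t\<in>B. w x t) = w y x + (\<Sum>t\<in>B. w y t)"
    using finB notin assms(7) by (simp add: row_sum_def)
  moreover have "(\<Sum>t\<in>B. w x t) - (\<Sum>t\<in>B. w y t) = (\<Sum>t\<in>B. c)"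
    unfolding sum_subtractf[symmetric] using B(1) c by (intro sum.cong) auto
  moreover have "(\<Sum>t\<in>B. c) = real (m - 2) * c"
    using B(2) by simp
  ultimately show ?thesis
    by linarith
qed

lemma constant_if_symmetric_with_constant_columns:
  assumes col: "\<And>x y z. x \<in> X \<Longrightarrow> y \<in> X \<Longrightarrow> z \<in> X \<Longrightarrow> x \<noteq> z \<Longrightarrow> y \<noteq> z \<Longrightarrow> w x z = w y z"
    and sym: "\<And>x y. x \<in> X \<Longrightarrow> y \<in> X \<Longrightarrow> x \<noteq> y \<Longrightarrow> w x y = w y x"
  shows "\<exists>\<alpha>. \<forall>x\<in>X. \<forall>z\<in>X. x \<noteq> z \<longrightarrow> w x z = \<alpha>"
proof (cases "\<exists>p\<in>X. \<exists>q\<in>X. p \<noteq> q")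
  case True
  then obtain p q where pq: "p \<in> X" "q \<in> X" "p \<noteq> q"
    by blast
  have "w x z = w p q" if "x \<in> X" "z \<in> X" "x \<noteq> z" for x z
  proof (cases "z = q")
    case True
    then show ?thesis
      using col[of x p q] that pq by auto
  next
    case False
    have "w x z = w q z"
      using col[of x q z] that pq False by auto
    also have "\<dots> = w z q"
      using sym[of q z] that pq False by auto
    also have "\<dots> = w p q"
      using col[of z p q] that pq False by auto
    finally show ?thesis .
  qed
  then show ?thesis
    by blast
qed auto

lemma equal_row_sums_two_sizes_imp_constant:
  assumes "finite X" and "equal_row_sums w X k" and "3 \<le> k" and "k < card X"
    and "equal_row_sums w X m" and "2 \<le> m" and "m \<le> card X" and "m \<noteq> k"
  shows "\<exists>\<alpha>. \<forall>x\<in>X. \<forall>z\<in>X. x \<noteq> z \<longrightarrow> w x z = \<alpha>"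
proof -
  have symmetric_and_column:
    "w x y = w y x \<and> w x t = w y t"
    if "x \<in> X" "y \<in> X" "t \<in> X" "x \<noteq> y" "t \<noteq> x" "t \<noteq> y" for x y t
  proof -
    define c where "c = w x t - w y t"
    have c: "w x s - w y s = c" if "s \<in> X - {x, y}" for s
    proof (cases "s = t")
      case False
      have "w x s - w x t = w y s - w y t"
        using that False \<open>x \<in> X\<close> \<open>y \<in> X\<close> \<open>t \<in> X\<close> \<open>x \<noteq> y\<close> \<open>t \<noteq> x\<close> \<open>t \<noteq> y\<close>
        by (intro equal_row_sums_column_difference[OF assms(1-4)]) auto
      then show ?thesis
        by (simp add: c_def)
    qed (simp add: c_def)
    have "w x y - w y x + real (m - 2) * c = 0"
      by (rule equal_row_sums_pair_identity[OF assms(1,5-7) that(1,2,4) c])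
    moreover have "w x y - w y x + real (k - 2) * c = 0"
      using assms(3,4) by (intro equal_row_sums_pair_identity[OF assms(1,2) _ _ that(1,2,4) c]) auto
    moreover have "real (m - 2) \<noteq> real (k - 2)"
      using assms(3,6,8) by simp
    ultimately have "c = 0"
      by (metis add_left_cancel mult_cancel_right)
    with \<open>w x y - w y x + real (m - 2) * c = 0\<close> show ?thesis
      by (simp add: c_def)
  qed
  have third: "\<exists>t\<in>X. t \<noteq> x \<and> t \<noteq> y" for x y
  proof -
    have "card {x, y} \<le> 2"
      by (cases "x = y") auto
    then have "card (X - {x, y}) \<noteq> 0"
      using assms(3,4) diff_card_le_card_Diff[of "{x, y}" X] by simp
    then have "X - {x, y} \<noteq> {}"
      by force
    then show ?thesis
      by auto
  qed
  show ?thesis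
  proof (rule constant_if_symmetric_with_constant_columns)
    show "w x z = w y z" if "x \<in> X" "y \<in> X" "z \<in> X" "x \<noteq> z" "y \<noteq> z" for x y z
      using symmetric_and_column[of x y z] that by (cases "x = y") auto
    show "w x y = w y x" if "x \<in> X" "y \<in> X" "x \<noteq> y" for x y
      using symmetric_and_column[of x y] third[of x y] that by blast
  qed
qed

theorem theorem1:
  fixes X :: "'a set" and D :: "('a \<times> 'a set) list"
    and u u' :: "'a \<Rightarrow> 'a \<Rightarrow> real" and k k' :: nat
  assumes "finite X"
    and "valid_dataset X D"
    and "k \<noteq> k'" and "2 \<le> k" and "k \<le> card X" and "2 \<le> k'" and "k' \<le> card X"
    and "k \<notin> {2, card X} \<or> k' \<notin> {2, card X}"
    and "\<forall>C. C \<subseteq> X \<and> card C = k \<longrightarrow> C \<in> choice_sets D"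
    and "\<forall>C. C \<subseteq> X \<and> card C = k' \<longrightarrow> C \<in> choice_sets D"
    and "\<forall>C\<in>choice_sets D. \<forall>x\<in>C. cdm_prob u x C = cdm_prob u' x C"
  shows "\<exists>\<alpha>::real. \<forall>x\<in>X. \<forall>z\<in>X. x \<noteq> z \<longrightarrow> u' x z - u x z = \<alpha>"
proof -
  define w where "w = (\<lambda>x z. u' x z - u x z)"
  have balanced: "equal_row_sums w X m"
    if "\<forall>C. C \<subseteq> X \<and> card C = m \<longrightarrow> C \<in> choice_sets D" for m
    unfolding equal_row_sums_def w_def
  proof (intro allI impI ballI)
    fix C x y
    assume C: "C \<subseteq> X \<and> card C = m" and "x \<in> C" "y \<in> C"
    then have "finite C" "C \<in> choice_sets D"
      using that assms(1) finite_subset by auto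
    then show "row_sum (\<lambda>a b. u' a b - u a b) C x = row_sum (\<lambda>a b. u' a b - u a b) C y"
      using \<open>x \<in> C\<close> \<open>y \<in> C\<close> assms(11) by (intro cdm_prob_eq_imp_row_sum_diff_eq) auto
  qed
  from assms(8) have "\<exists>\<alpha>. \<forall>x\<in>X. \<forall>z\<in>X. x \<noteq> z \<longrightarrow> w x z = \<alpha>"
  proof
    assume "k \<notin> {2, card X}"
    then show ?thesis
      using assms(3-7)
      by (intro equal_row_sums_two_sizes_imp_constant[OF assms(1) balanced[OF assms(9)] _ _
            balanced[OF assms(10)]]) auto
  next
    assume "k' \<notin> {2, card X}"
    then show ?thesis
      using assms(3-7)
      by (intro equal_row_sums_two_sizes_imp_constant[OF assms(1) balanced[OF assms(10)] _ _
            balanced[OF assms(9)]]) auto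
  qed
  then show ?thesis
    by (simp add: w_def)
qed

end
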